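(* Let $\mathcal{G}$ be a causal diagram with observed endogenous variables $\mathbf{O}$ and latent endogenous variables $\mathbf{L}$, let $\Pi$ be a policy space, and let $\mathbf{Y}\subseteq\mathbf{V}$. If $\mathbf{Y}\cap\mathbf{L}\neq\emptyset$, then $P(\mathbf{y}\mid\mathrm{do}(\pi))$ is not identifiable with respect to $\langle\mathcal{G},\Pi\rangle$.
   Context: A structural causal model (SCM) $M = \langle \mathbf{U}, \mathbf{V}, \mathcal{F}, P(\mathbf{u})\rangle$ has exogenous variables $\mathbf{U}$ drawn from $P(\mathbf{u})$, endogenous variables $\mathbf{V}$, and for each $V$ a function $V\leftarrow f_V(\mathrm{Pa}_V,U_V)$. A POSCM is $\langle M,\mathbf{O},\mathbf{L}\rangle$ with $\mathbf{O},\mathbf{L}$ a partition of $\mathbf{V}$ into observed and latent variables; $P(\mathbf{o})$ is the observational distribution. The causal diagram $\mathcal{G}$ has an arrow $V_j\to V_i$ when $V_j\in\mathrm{Pa}_{V_i}$ and a bidirected arrow $V_i\leftrightarrow V_j$ when $U_{V_i}\cap U_{V_j}\ne\emptyset$; $\mathcal{M}_{\langle\mathcal{G}\rangle}$ is the class of POSCMs with diagram $\mathcal{G}$. There is a distinguished action variable $X\in\mathbf{O}$; $\mathcal{G}_{\overline{X}}$ is $\mathcal{G}$ with arrows into $X$ removed. A policy space $\Pi$ is determined by covariates $\mathrm{Pa}(\Pi)\subseteq\mathbf{O}\setminus\mathrm{De}(X)_{\mathcal{G}_{\overline{X}}}$ and consists of all maps $\pi(x\mid\mathrm{pa}(\Pi))$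 to distributions over $X$. $\mathrm{do}(\pi)$ replaces $f_X$ by drawing $X\sim\pi$: $P(\mathbf{v}\mid\mathrm{do}(\pi))=\sum_{\mathbf{u}}P(\mathbf{u})\prod_{V\ne X}P(v\mid\mathrm{pa}_V,u_V)\pi(x\mid\mathrm{pa}(\Pi))$. $P(\mathbf{y}\mid\mathrm{do}(\pi))$ is identifiable w.r.t. $\langle\mathcal{G},\Pi\rangle$ if $P(\mathbf{y}\mid\mathrm{do}(\pi);M)$ is uniquely computable from $P(\mathbf{o};M)$ and $\pi$ for every $M\in\mathcal{M}_{\langle\mathcal{G}\rangle}$ and every $\pi\in\Pi$. *)

theory Defs
  imports "HOL-Probability.Probability"
begin

text \<open>
  Endogenous variables are indexed by a finite
  type 'v and take values in a finite type 'a.  Exogenous variables are indexed by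
  nat and take values in nat; an exogenous configuration is u :: nat => nat and
  P(u) is a pmf on such configurations (exogenous variables mutually independent).
  U_V is the set of exogenous indices feeding V; Pa_V its endogenous parents.
\<close>

record ('v, 'a) scm =
  PU   :: "(nat \<Rightarrow> nat) pmf"
  Uset :: "'v \<Rightarrow> nat set"
  Pa   :: "'v \<Rightarrow> 'v set"
  F    :: "'v \<Rightarrow> ('v \<Rightarrow> 'a) \<Rightarrow> (nat \<Rightarrow> nat) \<Rightarrow> 'a"

text \<open>Causal diagram: directed edges D W V (W -> V), bidirected edges B V W.\<close>

definition has_diagram ::
  "('v \<Rightarrow> 'v \<Rightarrow> bool) \<Rightarrow> ('v \<Rightarrow> 'v \<Rightarrow> bool) \<Rightarrow> ('v, 'a) scm \<Rightarrow> bool" where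
  "has_diagram D B M \<longleftrightarrow>
     (\<forall>V. Pa M V = {W. D W V}) \<and>
     (\<forall>V W. V \<noteq> W \<longrightarrow> (B V W \<longleftrightarrow> Uset M V \<inter> Uset M W \<noteq> {})) \<and>
     (\<forall>V v v' u u'. (\<forall>W\<in>Pa M V. v W = v' W) \<longrightarrow> (\<forall>k\<in>Uset M V. u k = u' k)
         \<longrightarrow> F M V v u = F M V v' u') \<and>
     prob_space.indep_vars (measure_pmf (PU M)) (\<lambda>_. count_space UNIV) (\<lambda>k u. u k) UNIV"

definition joint :: "('v::finite, 'a) scm \<Rightarrow> ('v \<Rightarrow> 'a) \<Rightarrow> real" where
  "joint M v = measure_pmf.expectation (PU M)
     (\<lambda>u. \<Prod>W\<in>UNIV. if v W = F M W v u then 1 else 0)"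

text \<open>P(v | do(pi)): X's mechanism is replaced by the policy pi (a map from
  assignments to distributions over X that only reads the covariates).\<close>

definition joint_do ::
  "('v::finite, 'a) scm \<Rightarrow> 'v \<Rightarrow> (('v \<Rightarrow> 'a) \<Rightarrow> 'a pmf) \<Rightarrow> ('v \<Rightarrow> 'a) \<Rightarrow> real" where
  "joint_do M X \<pi> v = measure_pmf.expectation (PU M)
     (\<lambda>u. (\<Prod>W\<in>UNIV - {X}. if v W = F M W v u then 1 else 0) * pmf (\<pi> v) (v X))"

text \<open>Marginals: P(o) and P(y | do(pi)); o, y are given as assignments, only their
  values on Obs (resp. Y) matter.\<close>

definition obs_marg :: "('v::finite, 'a::finite) scm \<Rightarrow> 'v set \<Rightarrow> ('v \<Rightarrow> 'a) \<Rightarrow> real" where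
  "obs_marg M Obs w = (\<Sum>v\<in>{v. \<forall>W\<in>Obs. v W = w W}. joint M v)"

definition do_marg ::
  "('v::finite, 'a::finite) scm \<Rightarrow> 'v \<Rightarrow> (('v \<Rightarrow> 'a) \<Rightarrow> 'a pmf) \<Rightarrow> 'v set \<Rightarrow> ('v \<Rightarrow> 'a) \<Rightarrow> real" where
  "do_marg M X \<pi> Y y = (\<Sum>v\<in>{v. \<forall>W\<in>Y. v W = y W}. joint_do M X \<pi> v)"

text \<open>Descendants of X in the diagram with arrows into X removed (includes X).\<close>

definition desc_cut :: "('v \<Rightarrow> 'v \<Rightarrow> bool) \<Rightarrow> 'v \<Rightarrow> 'v set" where
  "desc_cut D X = {W. (X, W) \<in> {(a, b). D a b \<and> b \<noteq> X}\<^sup>*}"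

text \<open>Policy space with covariates C = Pa(Pi): all pi depending only on C.\<close>

definition in_policy_space :: "'v set \<Rightarrow> (('v \<Rightarrow> 'a) \<Rightarrow> 'a pmf) \<Rightarrow> bool" where
  "in_policy_space C \<pi> \<longleftrightarrow> (\<forall>v v'. (\<forall>W\<in>C. v W = v' W) \<longrightarrow> \<pi> v = \<pi> v')"

definition identifiable ::
  "'a::finite itself \<Rightarrow> ('v::finite \<Rightarrow> 'v \<Rightarrow> bool) \<Rightarrow> ('v \<Rightarrow> 'v \<Rightarrow> bool) \<Rightarrow> 'v set
     \<Rightarrow> 'v \<Rightarrow> 'v set \<Rightarrow> 'v set \<Rightarrow> bool" where
  "identifiable ty D B Obs X C Y \<longleftrightarrow>
     (\<forall>(M1 :: ('v, 'a) scm) (M2 :: ('v, 'a) scm).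
        has_diagram D B M1 \<and> has_diagram D B M2 \<and> (\<forall>w. obs_marg M1 Obs w = obs_marg M2 Obs w)
        \<longrightarrow> (\<forall>\<pi>. in_policy_space C \<pi> \<longrightarrow> (\<forall>y. do_marg M1 X \<pi> Y y = do_marg M2 X \<pi> Y y)))"

end

theory Submission
  imports Defs
begin

text \<open>
  A latent variable leaves no trace in \<open>P(o)\<close> but may belong to \<open>Y\<close>. Take two models
  whose mechanisms are constant, with a degenerate exogenous distribution, that differ only
  in the value of a latent \<open>L \<in> Y\<close>: their observational distributions coincide, while
  under a constant policy \<open>P(y | do(\<pi>))\<close> is a point mass at two assignments that disagree
  on \<open>L\<close>. Any diagram is realised by such models: the parents are read off the diagram, and
  each bidirected edge is given its own exogenous index.
\<close>

lemma indep_vars_return_pmf: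
  "prob_space.indep_vars (measure_pmf (return_pmf x)) (\<lambda>_. count_space UNIV) X I"
  unfolding prob_space.indep_vars_def2[OF measure_pmf.prob_space_axioms]
proof (intro conjI ballI prob_space.indep_setsI[OF measure_pmf.prob_space_axioms])
  fix A :: "_ \<Rightarrow> _ set" and J assume "finite J"
  show "measure_pmf.prob (return_pmf x) (\<Inter> (A ` J))
          = (\<Prod>j\<in>J. measure_pmf.prob (return_pmf x) (A j))"
  proof (cases "\<forall>j\<in>J. x \<in> A j")
    case False
    then obtain j where "j \<in> J" "x \<notin> A j" by auto
    then have "(\<Prod>j\<in>J. indicator (A j) x :: real) = 0"
      using \<open>finite J\<close> by (intro prod_zero) (auto intro!: bexI[of _ j])
    moreover from \<open>j \<in> J\<close> \<open>x \<notin> A j\<close> have "x \<notin> \<Inter> (A ` J)" by blast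
    ultimately show ?thesis by (simp add: measure_return_pmf)
  qed (simp add: measure_return_pmf)
qed auto

lemma prod_indicator_all:
  assumes "finite S"
  shows "(\<Prod>x\<in>S. if P x then 1 else 0 :: 'b::comm_semiring_1) = (if \<forall>x\<in>S. P x then 1 else 0)"
  using assms by (simp add: prod_zero)

definition edge_codes :: "('v::countable \<Rightarrow> 'v \<Rightarrow> bool) \<Rightarrow> 'v \<Rightarrow> nat set" where
  "edge_codes B V =
     {prod_encode (to_nat V, to_nat W) | W. B V W} \<union> {prod_encode (to_nat W, to_nat V) | W. B V W}"

lemma edge_codes_meet_iff:
  assumes "V \<noteq> W" and sym: "\<forall>V W. B V W \<longleftrightarrow> B W V"
  shows "edge_codes B V \<inter> edge_codes B W \<noteq> {} \<longleftrightarrow> B V W"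
proof
  assume "B V W"
  with sym have "prod_encode (to_nat V, to_nat W) \<in> edge_codes B V \<inter> edge_codes B W"
    unfolding edge_codes_def by blast
  then show "edge_codes B V \<inter> edge_codes B W \<noteq> {}" by blast
next
  assume "edge_codes B V \<inter> edge_codes B W \<noteq> {}"
  then obtain e where e: "e \<in> edge_codes B V" "e \<in> edge_codes B W" by blast
  from e(1) obtain W1 where
      W1: "B V W1" "e = prod_encode (to_nat V, to_nat W1) \<or> e = prod_encode (to_nat W1, to_nat V)"
    unfolding edge_codes_def by blast
  from e(2) obtain W2 where
      W2: "B W W2" "e = prod_encode (to_nat W, to_nat W2) \<or> e = prod_encode (to_nat W2, to_nat W)"
    unfolding edge_codes_def by blast
  from W1(2) W2(2) \<open>V \<noteq> W\<close> have "W1 = W" by (auto simp: prod_encode_eq)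
  with W1(1) show "B V W" by simp
qed

definition constant_scm ::
  "('v::finite \<Rightarrow> 'v \<Rightarrow> bool) \<Rightarrow> ('v \<Rightarrow> 'v \<Rightarrow> bool) \<Rightarrow> ('v \<Rightarrow> 'a) \<Rightarrow> ('v, 'a) scm" where
  "constant_scm D B c =
     \<lparr>PU = return_pmf (\<lambda>_. 0), Uset = edge_codes B, Pa = (\<lambda>V. {W. D W V}), F = (\<lambda>V v u. c V)\<rparr>"

lemma has_diagram_constant_scm:
  assumes "\<forall>V W. B V W \<longleftrightarrow> B W V"
  shows "has_diagram D B (constant_scm D B c)"
  using edge_codes_meet_iff[OF _ assms] indep_vars_return_pmf
  unfolding has_diagram_def constant_scm_def by auto

lemma obs_marg_constant_scm:
  "obs_marg (constant_scm D B c) Obs w = (if \<forall>W\<in>Obs. c W = w W then 1 else 0)"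
proof -
  have "joint (constant_scm D B c) v = (if v = c then 1 else 0)" for v
    unfolding joint_def constant_scm_def by (simp add: prod_indicator_all fun_eq_iff)
  then show ?thesis
    unfolding obs_marg_def by (simp add: sum.delta)
qed

lemma do_marg_constant_scm_constant_policy:
  "do_marg (constant_scm D B c) X (\<lambda>_. return_pmf a) Y y
     = (if \<forall>W\<in>Y. (c(X := a)) W = y W then 1 else 0)"
proof -
  have "joint_do (constant_scm D B c) X (\<lambda>_. return_pmf a) v = (if v = c(X := a) then 1 else 0)"
    for v
    unfolding joint_do_def constant_scm_def
    by (auto simp: prod_indicator_all fun_eq_iff indicator_def)
  then show ?thesis
    unfolding do_marg_def by (simp add: sum.delta)
qed

theorem corollary1:
  fixes D B :: "'v::finite \<Rightarrow> 'v \<Rightarrow> bool"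
    and Obs C Y :: "'v set"
    and X :: 'v
  assumes "acyclic {(a, b). D a b}"
    and "\<forall>V W. B V W \<longleftrightarrow> B W V"
    and "\<forall>V. \<not> B V V"
    and "X \<in> Obs"
    and "C \<subseteq> Obs - desc_cut D X"
    and "CARD('a::finite) \<ge> 2"
    and "Y \<inter> (UNIV - Obs) \<noteq> {}"
  shows "\<not> identifiable TYPE('a) D B Obs X C Y"
proof
  assume identifiable: "identifiable TYPE('a) D B Obs X C Y"
  obtain L where "L \<in> Y" "L \<notin> Obs" using assms(7) by auto
  with assms(4) have "L \<noteq> X" by auto
  obtain a0 a1 :: 'a where "a0 \<noteq> a1" using assms(6) by (meson card_2_iff' ex_card)
  define c1 :: "'v \<Rightarrow> 'a" where "c1 = (\<lambda>_. a0)"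
  define c2 where "c2 = c1(L := a1)"
  define \<pi> :: "('v \<Rightarrow> 'a) \<Rightarrow> 'a pmf" where "\<pi> = (\<lambda>_. return_pmf a0)"
  have "obs_marg (constant_scm D B c1) Obs w = obs_marg (constant_scm D B c2) Obs w" for w
    using \<open>L \<notin> Obs\<close> by (auto simp: obs_marg_constant_scm c2_def)
  moreover have "in_policy_space C \<pi>"
    unfolding in_policy_space_def \<pi>_def by simp
  ultimately have "do_marg (constant_scm D B c1) X \<pi> Y c1 = do_marg (constant_scm D B c2) X \<pi> Y c1"
    using identifiable has_diagram_constant_scm[OF assms(2)] unfolding identifiable_def by blast
  moreover have "do_marg (constant_scm D B c1) X \<pi> Y c1 = 1"
    by (simp add: \<pi>_def do_marg_constant_scm_constant_policy c1_def)
  moreover have "do_marg (constant_scm D B c2) X \<pi> Y c1 = 0"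
    using \<open>L \<in> Y\<close> \<open>L \<noteq> X\<close> \<open>a0 \<noteq> a1\<close>
    by (auto simp: \<pi>_def do_marg_constant_scm_constant_policy c1_def c2_def)
  ultimately show False by simp
qed

end
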